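(* Suppose $\beta_n \phi^+_n \phi^-_n \to 0$. Then for any non-trivial solution $\psi_n = a^+_n \phi^+_n + a^-_n \phi^-_n$ of $(-\Delta+V)\psi=0$ with $a^\pm_n$ satisfying the recurrence $\begin{pmatrix} a^+_{n+1}\\ a^-_{n+1}\end{pmatrix} = (I+M_n)\begin{pmatrix} a^+_{n}\\ a^-_{n}\end{pmatrix}$, one of the following must be true: (1) Given any integer $N$, there is an integer $p>N$ such that both $a^+_p$ and $a^-_p$ are non-zero. (2) There is an integer $p_0$ such that $a^+_{p_0+k} = a^+_{p_0} \neq 0$ and $a^-_{p_0+k} = 0$ for all $k \geq 0$. (3) There is an integer $p_0$ such that $a^-_{p_0+k} = a^-_{p_0} \neq 0$ and $a^+_{p_0+k} = 0$ for all $k \geq 0$.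
   Context: On the positive integers, $(\Delta f)_n = f_{n+1}+f_{n-1}-2f_n$; $V, V^0$ are real potentials, $\phi^\pm$ are independent solutions of $(-\Delta+V^0)\phi=0$ with Wronskian $W=\phi^-_n\phi^+_{n+1}-\phi^-_{n+1}\phi^+_n$, and $\beta_n=(V_n-V^0_n)/W$. Solutions $\psi$ of $(-\Delta+V)\psi=0$ are represented as $\psi_n=a^+_n\phi^+_n+a^-_n\phi^-_n$ where the coefficients satisfy $(\nabla^-a^+_n)\phi^+_{n-1}+(\nabla^-a^-_n)\phi^-_{n-1}=0$ (with $\nabla^-f_n=f_n-f_{n-1}$, $\phi^\pm_0=0$) and the recurrence with $M_n := \beta_n\begin{pmatrix}\phi^+_n\phi^-_n & (\phi^-_n)^2\\ -(\phi^+_n)^2 & -\phi^+_n\phi^-_n\end{pmatrix}$. *)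

theory Defs
  imports "HOL-Analysis.Analysis"
begin

text \<open>Sequences on the positive integers are modelled as functions nat \<Rightarrow> real;
  only indices n \<ge> 1 matter (index 0 only enters through the value f 0 in
  the discrete Laplacian at n = 1).\<close>

definition dlap :: "(nat \<Rightarrow> real) \<Rightarrow> nat \<Rightarrow> real" where
  "dlap f n = f (n + 1) + f (n - 1) - 2 * f n"

definition nabla_minus :: "(nat \<Rightarrow> real) \<Rightarrow> nat \<Rightarrow> real" where
  "nabla_minus f n = f n - f (n - 1)"

definition is_solution :: "(nat \<Rightarrow> real) \<Rightarrow> (nat \<Rightarrow> real) \<Rightarrow> bool" where
  "is_solution V f \<longleftrightarrow> (\<forall>n\<ge>1. - dlap f n + V n * f n = 0)"

text \<open>Wronskian W = phi^-_n phi^+_{n+1} - phi^-_{n+1} phi^+_n (independent of n for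
  two solutions of the same equation); we evaluate it at n = 1.\<close>
definition wronskian :: "(nat \<Rightarrow> real) \<Rightarrow> (nat \<Rightarrow> real) \<Rightarrow> real" where
  "wronskian phip phim = phim 1 * phip 2 - phim 2 * phip 1"

definition beta :: "(nat \<Rightarrow> real) \<Rightarrow> (nat \<Rightarrow> real) \<Rightarrow> (nat \<Rightarrow> real) \<Rightarrow> (nat \<Rightarrow> real) \<Rightarrow> nat \<Rightarrow> real" where
  "beta V V0 phip phim n = (V n - V0 n) / wronskian phip phim"

definition Mmat :: "(nat \<Rightarrow> real) \<Rightarrow> (nat \<Rightarrow> real) \<Rightarrow> (nat \<Rightarrow> real) \<Rightarrow> (nat \<Rightarrow> real) \<Rightarrow> nat \<Rightarrow> real^2^2" where
  "Mmat V V0 phip phim n =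
     beta V V0 phip phim n *\<^sub>R
       vector [vector [phip n * phim n, (phim n)^2],
               vector [- ((phip n)^2), - (phip n * phim n)]]"

end

theory Submission
  imports Defs
begin

text \<open>Once \<open>\<bar>\<beta>\<^sub>n \<phi>\<^sup>+\<^sub>n \<phi>\<^sup>-\<^sub>n\<bar> < 1\<close>, the recurrence cannot kill the only
  non-zero coefficient in one step; so if from some point on one coefficient always vanishes, the
  other one is either eventually zero or frozen (the step forces \<open>\<beta>\<^sub>n \<phi>\<^sup>\<pm>\<^sub>n = 0\<close>).
  In the remaining case \<open>\<psi>\<close> vanishes eventually, hence everywhere by backward uniqueness for the
  second-order equation.\<close>

lemma Mmat_mult_vector:
  "(mat 1 + Mmat V V0 phip phim n) *v vector [a, c]
     = (vector [a + beta V V0 phip phim n * (phip n * phim n * a + (phim n)\<^sup>2 * c),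
               c - beta V V0 phip phim n * ((phip n)\<^sup>2 * a + phip n * phim n * c)] :: real^2)"
  by (simp add: Mmat_def vec_eq_iff forall_2 matrix_vector_mult_def sum_2 mat_def vector_2
      algebra_simps)

lemma vector_2_eq_iff: "(vector [a, c] :: 'a::zero^2) = vector [a', c'] \<longleftrightarrow> a = a' \<and> c = c'"
  by (metis vector_1 vector_2)

lemma single_coefficient_persists:
  fixes b p m a c a' c' :: real
  assumes a': "a' = a + b * (p * m * a + m\<^sup>2 * c)"
    and c': "c' = c - b * (p\<^sup>2 * a + p * m * c)"
    and small: "\<bar>b * p * m\<bar> < 1" and "a \<noteq> 0" "c = 0"
    and one_zero: "a' = 0 \<or> c' = 0"
  shows "a' = a \<and> c' = 0"
proof -
  have "a' = a * (1 + b * p * m)" using a' \<open>c = 0\<close> by (simp add: algebra_simps)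
  moreover have "1 + b * p * m \<noteq> 0" using small by auto
  ultimately have "a' \<noteq> 0" using \<open>a \<noteq> 0\<close> by simp
  then have "c' = 0" using one_zero by simp
  then have "b * p = 0" using c' \<open>a \<noteq> 0\<close> \<open>c = 0\<close> by (simp add: power2_eq_square)
  then show ?thesis using a' \<open>c = 0\<close> \<open>c' = 0\<close> by auto
qed

lemma persists_forever:
  assumes "P q" and "\<And>n. n \<ge> q \<Longrightarrow> P n \<Longrightarrow> P (Suc n)"
  shows "P (q + k)"
  by (induction k) (use assms in auto)

lemma coefficient_trichotomy:
  fixes a c b p m :: "nat \<Rightarrow> real"
  assumes rec: "\<And>n. n \<ge> start \<Longrightarrow>
      a (Suc n) = a n + b n * (p n * m n * a n + (m n)\<^sup>2 * c n)
    \<and> c (Suc n) = c n - b n * ((p n)\<^sup>2 * a n + p n * m n * c n)"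
    and lim: "(\<lambda>n. b n * p n * m n) \<longlonglongrightarrow> 0"
  shows "(\<forall>N. \<exists>q>N. a q \<noteq> 0 \<and> c q \<noteq> 0)
       \<or> (\<exists>q0\<ge>start. a q0 \<noteq> 0 \<and> (\<forall>k. a (q0 + k) = a q0 \<and> c (q0 + k) = 0))
       \<or> (\<exists>q0\<ge>start. c q0 \<noteq> 0 \<and> (\<forall>k. c (q0 + k) = c q0 \<and> a (q0 + k) = 0))
       \<or> (\<exists>K. \<forall>q\<ge>K. a q = 0 \<and> c q = 0)"
proof (rule ccontr)
  assume H: "\<not> ?thesis"
  have "\<forall>\<^sub>F n in sequentially. \<bar>b n * p n * m n\<bar> < 1"
    using tendstoD[OF lim zero_less_one] by (simp add: dist_real_def)
  then obtain N0 where small: "\<And>n. n \<ge> N0 \<Longrightarrow> \<bar>b n * p n * m n\<bar> < 1"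
    by (auto simp: eventually_sequentially)
  from H obtain N where one_zero: "\<And>q. q > N \<Longrightarrow> a q = 0 \<or> c q = 0" by auto
  define K where "K = max (max N0 start) (Suc N)"
  have step_a: "a (Suc n) = a n \<and> c (Suc n) = 0" if "n \<ge> K" "a n \<noteq> 0 \<and> c n = 0" for n
    using single_coefficient_persists[of "a (Suc n)" "a n" "b n" "p n" "m n" "c n" "c (Suc n)"]
      rec[of n] small[of n] one_zero[of "Suc n"] that by (auto simp: K_def)
  have step_c: "c (Suc n) = c n \<and> a (Suc n) = 0" if "n \<ge> K" "c n \<noteq> 0 \<and> a n = 0" for n
    using single_coefficient_persists[of "c (Suc n)" "c n" "- b n" "m n" "p n" "a n" "a (Suc n)"]
      rec[of n] small[of n] one_zero[of "Suc n"] that by (auto simp: K_def algebra_simps)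
  have "a q = 0 \<and> c q = 0" if "q \<ge> K" for q
  proof (rule ccontr)
    assume nz: "\<not> (a q = 0 \<and> c q = 0)"
    have "q \<ge> start" "a q = 0 \<or> c q = 0" using that one_zero[of q] by (auto simp: K_def)
    then consider "a q \<noteq> 0 \<and> c q = 0" | "c q \<noteq> 0 \<and> a q = 0" using nz by auto
    then show False
    proof cases
      case 1
      have "a (q + k) = a q \<and> c (q + k) = 0" for k
        using persists_forever[where P = "\<lambda>n. a n = a q \<and> c n = 0"] step_a 1 that by force
      then show False using H 1 \<open>q \<ge> start\<close> by auto
    next
      case 2
      have "c (q + k) = c q \<and> a (q + k) = 0" for k
        using persists_forever[where P = "\<lambda>n. c n = c q \<and> a n = 0"] step_c 2 that by force
      then show False using H 2 \<open>q \<ge> start\<close> by auto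
    qed
  qed
  then show False using H by blast
qed

lemma solution_vanishes_below:
  assumes sol: "is_solution V psi" and "psi n = 0" "psi (Suc n) = 0" "m \<le> n"
  shows "psi m = 0"
  using assms(2-4)
proof (induction n)
  case 0
  then show ?case by simp
next
  case (Suc n)
  have "- dlap psi (Suc n) + V (Suc n) * psi (Suc n) = 0"
    using sol by (simp add: is_solution_def)
  then have "psi n = 0" using Suc.prems by (simp add: dlap_def)
  then show ?case using Suc by (cases "m = Suc n") auto
qed

theorem proposition1:
  fixes V V0 phip phim psi ap am :: "nat \<Rightarrow> real"
  assumes sol_p: "is_solution V0 phip"
    and sol_m: "is_solution V0 phim"
    and indep: "wronskian phip phim \<noteq> 0"
    and lim: "(\<lambda>n. beta V V0 phip phim n * phip n * phim n) \<longlonglongrightarrow> 0"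
    and sol_psi: "is_solution V psi"
    and nontriv: "\<exists>n\<ge>1. psi n \<noteq> 0"
    and repr: "\<And>n. n \<ge> 1 \<Longrightarrow> psi n = ap n * phip n + am n * phim n"
    and constr: "\<And>n. n \<ge> 2 \<Longrightarrow>
                   nabla_minus ap n * phip (n - 1) + nabla_minus am n * phim (n - 1) = 0"
    and recur: "\<And>n. n \<ge> 1 \<Longrightarrow>
                   vector [ap (n + 1), am (n + 1)]
                     = (mat 1 + Mmat V V0 phip phim n) *v vector [ap n, am n]"
  shows "(\<forall>N::nat. \<exists>p>N. ap p \<noteq> 0 \<and> am p \<noteq> 0)
       \<or> (\<exists>p0\<ge>1. ap p0 \<noteq> 0 \<and> (\<forall>k. ap (p0 + k) = ap p0 \<and> am (p0 + k) = 0))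
       \<or> (\<exists>p0\<ge>1. am p0 \<noteq> 0 \<and> (\<forall>k. am (p0 + k) = am p0 \<and> ap (p0 + k) = 0))"
proof -
  have "\<not> (\<exists>K. \<forall>q\<ge>K. ap q = 0 \<and> am q = 0)"
  proof
    assume "\<exists>K. \<forall>q\<ge>K. ap q = 0 \<and> am q = 0"
    then obtain K where "\<And>q. q \<ge> max K 1 \<Longrightarrow> psi q = 0" using repr by fastforce
    moreover obtain n where "n \<ge> 1" "psi n \<noteq> 0" using nontriv by blast
    ultimately show False
      using solution_vanishes_below[OF sol_psi, of "max K n" n] by simp
  qed
  moreover have "\<And>n. n \<ge> 1 \<Longrightarrow>
      ap (Suc n) = ap n + beta V V0 phip phim n * (phip n * phim n * ap n + (phim n)\<^sup>2 * am n)
    \<and> am (Suc n) = am n - beta V V0 phip phim n * ((phip n)\<^sup>2 * ap n + phip n * phim n * am n)"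
    using recur by (simp add: Mmat_mult_vector vector_2_eq_iff)
  ultimately show ?thesis
    using coefficient_trichotomy[where start = 1, OF _ lim] by blast
qed

end
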